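(* For $t,\theta\in\mathbb N_0$ with $t\le\theta$, almost surely $\sigma(t;\underline M(t,\theta))\le\theta<\sigma(t;\underline M(t,\theta)-)$.
   Context: $(\Omega,\mathcal F,\mathbb P)$ complete with filtration $\{\mathcal F(t)\}_{t\in\mathbb N_0}$; $\beta\in(0,1)$; $\{h(t)\}_{t\in\mathbb N}$ positive, predictable, with $\mathbb E[\sum_{t\ge0}\beta^th(t+1)]<\infty$. $\mathcal S(t)$: stopping times valued in $\{t,t+1,\dots\}\cup\{\infty\}$; $\beta^\infty:=0$. $V(t;m):=\operatorname{ess\,sup}_{\tau\in\mathcal S(t)}\mathbb E[\sum_{u=t}^{\tau-1}\beta^{u-t}h(u+1)+m\beta^{\tau-t}\mid\mathcal F(t)]$, $m\ge0$ (a.s. continuous in $m$); $\sigma(t;m):=\inf\{\theta\ge t:V(\theta;m)=m\}$, and $\sigma(t;m-):=\lim_{\delta\downarrow0}\sigma(t;m-\delta)$ ($m\mapsto\sigma(t;m)$ is a.s. decreasing, so this limit exists). $M(t):=\operatorname{ess\,sup}\{X>0\ \mathcal F(t)\text{-measurable}:V(t;X)\ge X\}$; $\underline M(t,\theta):=\min_{t\le u\le\theta}M(u)$ (evaluating $\sigma(t;\cdot)$ at this random level pathwise). *)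

theory Defs
  imports "HOL-Probability.Probability"
begin

definition stopping_from :: "'a measure \<Rightarrow> (nat \<Rightarrow> 'a measure) \<Rightarrow> nat \<Rightarrow> ('a \<Rightarrow> enat) \<Rightarrow> bool" where
  "stopping_from M F t \<tau> \<longleftrightarrow>
     (\<forall>\<omega>\<in>space M. enat t \<le> \<tau> \<omega>) \<and> (\<forall>n. {\<omega>\<in>space M. \<tau> \<omega> = enat n} \<in> sets (F n))"

text \<open>The reward sum_{u=t}^{tau-1} beta^(u-t) h(u+1) + m beta^(tau-t), with beta^infinity = 0
  (nonnegative, hence taken in ennreal); the retirement reward m may be random.\<close>
definition payoff :: "real \<Rightarrow> (nat \<Rightarrow> 'a \<Rightarrow> real) \<Rightarrow> nat \<Rightarrow> ('a \<Rightarrow> real) \<Rightarrow> ('a \<Rightarrow> enat) \<Rightarrow> 'a \<Rightarrow> ennreal" where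
  "payoff \<beta> h t m \<tau> \<omega> = (case \<tau> \<omega> of
      enat n \<Rightarrow> (\<Sum>u\<in>{t..<n}. ennreal (\<beta> ^ (u - t) * h (Suc u) \<omega>)) + ennreal (m \<omega> * \<beta> ^ (n - t))
    | \<infinity> \<Rightarrow> (\<Sum>k. ennreal (\<beta> ^ k * h (Suc (t + k)) \<omega>)))"

definition is_ess_sup :: "'a measure \<Rightarrow> 'a measure \<Rightarrow> ('a \<Rightarrow> ennreal) set \<Rightarrow> ('a \<Rightarrow> ennreal) \<Rightarrow> bool" where
  "is_ess_sup M G Xs Y \<longleftrightarrow>
     Y \<in> borel_measurable G \<and>
     (\<forall>X\<in>Xs. AE \<omega> in M. X \<omega> \<le> Y \<omega>) \<and>
     (\<forall>Z\<in>borel_measurable G. (\<forall>X\<in>Xs. AE \<omega> in M. X \<omega> \<le> Z \<omega>) \<longrightarrow> (AE \<omega> in M. Y \<omega> \<le> Z \<omega>))"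

text \<open>The family whose essential supremum is V(t;m) (m possibly an F(t)-measurable random variable).\<close>
definition value_family :: "'a measure \<Rightarrow> (nat \<Rightarrow> 'a measure) \<Rightarrow> real \<Rightarrow> (nat \<Rightarrow> 'a \<Rightarrow> real)
    \<Rightarrow> nat \<Rightarrow> ('a \<Rightarrow> real) \<Rightarrow> ('a \<Rightarrow> ennreal) set" where
  "value_family M F \<beta> h t m =
     {nn_cond_exp M (F t) (payoff \<beta> h t m \<tau>) | \<tau>. stopping_from M F t \<tau>}"

text \<open>The family whose essential supremum is M(t).\<close>
definition index_family :: "'a measure \<Rightarrow> (nat \<Rightarrow> 'a measure) \<Rightarrow> real \<Rightarrow> (nat \<Rightarrow> 'a \<Rightarrow> real)
    \<Rightarrow> nat \<Rightarrow> ('a \<Rightarrow> ennreal) set" where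
  "index_family M F \<beta> h t =
     {(\<lambda>\<omega>. ennreal (X \<omega>)) | X. X \<in> borel_measurable (F t) \<and> (\<forall>\<omega>\<in>space M. 0 < X \<omega>) \<and>
        (\<exists>W. is_ess_sup M (F t) (value_family M F \<beta> h t X) W \<and>
             (AE \<omega> in M. ennreal (X \<omega>) < W \<omega>))}"

text \<open>sigma(t;m) = inf {theta >= t : V(theta;m) = m} (inf of the empty set = infinity).\<close>
definition sigma_hit :: "(nat \<Rightarrow> real \<Rightarrow> 'a \<Rightarrow> real) \<Rightarrow> nat \<Rightarrow> real \<Rightarrow> 'a \<Rightarrow> enat" where
  "sigma_hit V t m \<omega> = Inf {enat \<theta> | \<theta>. t \<le> \<theta> \<and> V \<theta> m \<omega> = m}"

definition sigma_hit_left :: "(nat \<Rightarrow> real \<Rightarrow> 'a \<Rightarrow> real) \<Rightarrow> nat \<Rightarrow> real \<Rightarrow> 'a \<Rightarrow> enat" where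
  "sigma_hit_left V t m \<omega> = Lim (at_right 0) (\<lambda>\<delta>. sigma_hit V t (m - \<delta>) \<omega>)"

definition index_min :: "(nat \<Rightarrow> 'a \<Rightarrow> real) \<Rightarrow> nat \<Rightarrow> nat \<Rightarrow> 'a \<Rightarrow> real" where
  "index_min Mi t \<theta> \<omega> = Min ((\<lambda>u. Mi u \<omega>) ` {t..\<theta>})"

end

theory Submission
  imports Defs
begin

(* For each u, almost surely V(u;x) = x holds exactly for the levels x >= M(u). Indeed
   x |-> V(u;x) - x is nonnegative (retire at once) and nonincreasing (raising the retirement
   reward by d raises the value by at most d). It is positive below M(u): where V(u;q) <= q,
   every F(u)-measurable level X with V(u;X) > X is at most q, and M(u) is the essential
   supremum of such levels. It vanishes above M(u): where V(u;q) > q, the first profitable level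
   among q, 1, 1/2, 1/3, ... is q, and this random level is itself one of those X. Proving this
   for rational levels and using continuity in x gives the characterisation for all x at once.
   Hence sigma(t;m) is the first time theta' >= t with M(theta') <= m: for m the minimum of M
   over [t, theta] it is at most theta, while for m slightly smaller it is the first time with
   M(theta') < m, which exceeds theta. *)

lemma continuous_ge_at_left_end_from_rats:
  fixes g :: "real \<Rightarrow> real"
  assumes cont: "continuous_on {x..b} g" and "x < b"
    and ge: "\<And>r. r \<in> \<rat> \<Longrightarrow> x < r \<Longrightarrow> r < b \<Longrightarrow> c \<le> g r"
  shows "c \<le> g x"
proof -
  have closure: "closure ({x<..<b} \<inter> \<rat>) = {x..b}"
    using closure_open_Int_superset[of "{x<..<b}" \<rat>] \<open>x < b\<close> by (simp add: Rats_closure_real)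
  show ?thesis
    by (rule continuous_ge_on_closure[of "{x<..<b} \<inter> \<rat>"]) (use cont ge \<open>x < b\<close> closure in auto)
qed

lemma fixed_point_iff_ge_threshold:
  fixes f :: "real \<Rightarrow> real"
  assumes cont: "continuous_on {0..} f"
    and ge: "\<And>q. q \<in> \<rat> \<Longrightarrow> 0 < q \<Longrightarrow> q \<le> f q"
    and gap_antimono: "\<And>q q'. q \<in> \<rat> \<Longrightarrow> q' \<in> \<rat> \<Longrightarrow> 0 < q \<Longrightarrow> q \<le> q' \<Longrightarrow> f q' - q' \<le> f q - q"
    and above: "\<And>q. q \<in> \<rat> \<Longrightarrow> 0 < q \<Longrightarrow> m < q \<Longrightarrow> f q \<le> q"
    and below: "\<And>q. q \<in> \<rat> \<Longrightarrow> 0 < q \<Longrightarrow> q < m \<Longrightarrow> q < f q"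
    and "0 \<le> x"
  shows "f x = x \<longleftrightarrow> m \<le> x"
proof -
  have cont_gap: "continuous_on {x..b} (\<lambda>y. f y - y)" "continuous_on {x..b} (\<lambda>y. y - f y)" for b
  proof -
    have "continuous_on {x..b} f" by (rule continuous_on_subset[OF cont]) (use \<open>0 \<le> x\<close> in auto)
    then show "continuous_on {x..b} (\<lambda>y. f y - y)" "continuous_on {x..b} (\<lambda>y. y - f y)"
      by (auto intro: continuous_on_diff continuous_on_id)
  qed
  show ?thesis
  proof
    assume fixed: "f x = x"
    show "m \<le> x"
    proof (rule ccontr)
      assume "\<not> m \<le> x"
      then obtain q where q: "q \<in> \<rat>" "x < q" "q < m" using Rats_dense_in_real[of x m] by auto
      have "f q - q \<le> f x - x"
      proof (rule continuous_ge_at_left_end_from_rats[OF cont_gap(1) \<open>x < q\<close>])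
        fix r assume "r \<in> \<rat>" "x < r" "r < q"
        then show "f q - q \<le> f r - r" using gap_antimono[of r q] q(1) \<open>0 \<le> x\<close> by simp
      qed
      with below[OF q(1) _ q(3)] fixed q(2) \<open>0 \<le> x\<close> show False by simp
    qed
  next
    assume "m \<le> x"
    have "0 \<le> f x - x"
    proof (rule continuous_ge_at_left_end_from_rats[OF cont_gap(1), of "x + 1"])
      fix r assume "r \<in> \<rat>" "x < r"
      then show "0 \<le> f r - r" using ge[of r] \<open>0 \<le> x\<close> by simp
    qed simp
    moreover have "0 \<le> x - f x"
    proof (rule continuous_ge_at_left_end_from_rats[OF cont_gap(2), of "x + 1"])
      fix r assume "r \<in> \<rat>" "x < r"
      then show "0 \<le> r - f r" using above[of r] \<open>0 \<le> x\<close> \<open>m \<le> x\<close> by simp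
    qed simp
    ultimately show "f x = x" by simp
  qed
qed

lemma eventually_Inf_le_minus_eq_Inf_less:
  fixes a :: "nat \<Rightarrow> real"
  shows "\<forall>\<^sub>F \<delta> in at_right 0.
           Inf {enat n | n. P n \<and> a n \<le> m - \<delta>} = Inf {enat n | n. P n \<and> a n < m}"
proof (cases "\<exists>n. P n \<and> a n < m")
  case False
  have "\<forall>\<^sub>F \<delta> in at_right (0::real). 0 < \<delta>" by (rule eventually_at_right_less)
  then show ?thesis
    by eventually_elim (use False in \<open>auto intro!: arg_cong[where f = Inf]\<close>)
next
  case True
  define s where "s = (LEAST n. P n \<and> a n < m)"
  have s: "P s" "a s < m" and s_least: "\<And>n. P n \<Longrightarrow> a n < m \<Longrightarrow> s \<le> n"
    using LeastI_ex[OF True] Least_le[of "\<lambda>n. P n \<and> a n < m"] unfolding s_def by auto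
  have "\<forall>\<^sub>F \<delta> in at_right (0::real). \<delta> \<in> {0<..<m - a s}"
    using s(2) by (intro eventually_at_right_real) simp
  then show ?thesis
  proof eventually_elim
    case (elim \<delta>)
    have "Inf {enat n | n. P n \<and> a n \<le> m - \<delta>} \<le> enat s"
      by (rule Inf_lower) (use s elim in auto)
    also have "\<dots> \<le> Inf {enat n | n. P n \<and> a n < m}"
      by (rule Inf_greatest) (use s_least in auto)
    finally show ?case
      by (rule antisym, intro Inf_superset_mono) (use elim in force)
  qed
qed

lemma sigma_hit_index_min:
  fixes V :: "nat \<Rightarrow> real \<Rightarrow> 'a \<Rightarrow> real" and Mi :: "nat \<Rightarrow> 'a \<Rightarrow> real"
  assumes fixed_iff: "\<And>u x. 0 \<le> x \<Longrightarrow> V u x \<omega> = x \<longleftrightarrow> Mi u \<omega> \<le> x"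
    and Mi_pos: "\<And>u. 0 < Mi u \<omega>" and "t \<le> \<theta>"
  shows "sigma_hit V t (index_min Mi t \<theta> \<omega>) \<omega> \<le> enat \<theta> \<and>
         enat \<theta> < sigma_hit_left V t (index_min Mi t \<theta> \<omega>) \<omega>"
proof -
  define m where "m = index_min Mi t \<theta> \<omega>"
  have finite_ne: "finite ((\<lambda>u. Mi u \<omega>) ` {t..\<theta>})" "(\<lambda>u. Mi u \<omega>) ` {t..\<theta>} \<noteq> {}"
    using \<open>t \<le> \<theta>\<close> by auto
  obtain u0 where u0: "u0 \<in> {t..\<theta>}" "Mi u0 \<omega> = m"
    using Min_in[OF finite_ne] unfolding m_def index_min_def by auto
  have m_le: "m \<le> Mi u \<omega>" if "u \<in> {t..\<theta>}" for u
    using finite_ne that unfolding m_def index_min_def by simp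
  have "0 < m" using u0 Mi_pos by metis
  have sigma_eq: "sigma_hit V t x \<omega> = Inf {enat n | n. t \<le> n \<and> Mi n \<omega> \<le> x}" if "0 \<le> x" for x
    unfolding sigma_hit_def using fixed_iff[OF that] by metis
  have "sigma_hit V t m \<omega> \<le> enat u0"
    unfolding sigma_eq[OF less_imp_le[OF \<open>0 < m\<close>]] by (rule Inf_lower) (use u0 in auto)
  also have "\<dots> \<le> enat \<theta>" using u0 by simp
  finally have hit: "sigma_hit V t m \<omega> \<le> enat \<theta>" .
  let ?first_below = "Inf {enat n | n. t \<le> n \<and> Mi n \<omega> < m}"
  have "\<forall>\<^sub>F \<delta> in at_right 0. sigma_hit V t (m - \<delta>) \<omega> = ?first_below"
    using eventually_Inf_le_minus_eq_Inf_less[of "\<lambda>n. t \<le> n" "\<lambda>n. Mi n \<omega>" m]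
      eventually_at_right_real[OF \<open>0 < m\<close>]
    by eventually_elim (simp add: sigma_eq)
  then have left: "sigma_hit_left V t m \<omega> = ?first_below"
    unfolding sigma_hit_left_def by (rule tendsto_Lim[OF trivial_limit_at_right_real tendsto_eventually])
  have "\<theta> < n" if "t \<le> n" "Mi n \<omega> < m" for n
    using m_le[of n] that by force
  then have "enat (Suc \<theta>) \<le> ?first_below"
    by (auto intro!: Inf_greatest simp: Suc_le_eq)
  with hit left show ?thesis
    unfolding m_def by (metis Suc_ile_eq)
qed

lemma is_ess_sup_measurable: "is_ess_sup M G Xs W \<Longrightarrow> W \<in> borel_measurable G"
  unfolding is_ess_sup_def by blast

lemma is_ess_sup_upper: "is_ess_sup M G Xs W \<Longrightarrow> X \<in> Xs \<Longrightarrow> AE \<omega> in M. X \<omega> \<le> W \<omega>"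
  unfolding is_ess_sup_def by blast

lemma is_ess_sup_least:
  "is_ess_sup M G Xs W \<Longrightarrow> Z \<in> borel_measurable G \<Longrightarrow> (\<And>X. X \<in> Xs \<Longrightarrow> AE \<omega> in M. X \<omega> \<le> Z \<omega>)
    \<Longrightarrow> AE \<omega> in M. W \<omega> \<le> Z \<omega>"
  unfolding is_ess_sup_def by blast

lemma stopping_from_const:
  assumes "\<And>n. subalgebra M (F n)" and "t \<le> k"
  shows "stopping_from M F t (\<lambda>_. enat k)"
  unfolding stopping_from_def
proof safe
  fix n
  have "space M \<in> sets (F n)" using assms(1)[of n] sets.top[of "F n"] by (simp add: subalgebra_def)
  then show "{\<omega> \<in> space M. enat k = enat n} \<in> sets (F n)"
    by (cases "k = n") auto
qed (use assms(2) in simp)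

lemma stopping_from_measurable:
  assumes sub: "\<And>n. subalgebra M (F n)" and "stopping_from M F t \<tau>"
  shows "\<tau> \<in> measurable M (count_space UNIV)"
proof -
  have finite_time: "{\<omega>\<in>space M. \<tau> \<omega> = enat n} \<in> sets M" for n
    using assms sub[of n] unfolding stopping_from_def subalgebra_def by blast
  have "{\<omega>\<in>space M. \<tau> \<omega> = \<infinity>} = space M - (\<Union>n. {\<omega>\<in>space M. \<tau> \<omega> = enat n})"
    using not_infinity_eq by auto
  then have "{\<omega>\<in>space M. \<tau> \<omega> = \<infinity>} \<in> sets M" using finite_time by auto
  then have "{\<omega>\<in>space M. \<tau> \<omega> = i} \<in> sets M" for i
    using finite_time by (cases i) simp_all
  moreover have "\<tau> -` {i} \<inter> space M = {\<omega>\<in>space M. \<tau> \<omega> = i}" for i by auto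
  ultimately show ?thesis by (simp add: measurable_count_space_eq2_countable)
qed

lemma payoff_cong: "m \<omega> = m' \<omega> \<Longrightarrow> payoff \<beta> h t m \<tau> \<omega> = payoff \<beta> h t m' \<tau> \<omega>"
  by (simp add: payoff_def split: enat.split)

lemma ennreal_mult_le_add_excess:
  fixes x q b :: real
  assumes "0 \<le> q" "0 \<le> b" "b \<le> 1"
  shows "ennreal (x * b) \<le> ennreal (q * b) + ennreal (x - q)"
proof (cases "x \<le> q")
  case True
  then have "ennreal (x * b) \<le> ennreal (q * b)" using assms by (intro ennreal_leI mult_right_mono)
  then show ?thesis by (intro add_increasing2) auto
next
  case False
  have "x * b \<le> q * b + (x - q)"
    using mult_left_le[of b "x - q"] False assms by (simp add: algebra_simps)
  then have "ennreal (x * b) \<le> ennreal (q * b + (x - q))" by (rule ennreal_leI)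
  also have "\<dots> = ennreal (q * b) + ennreal (x - q)"
    using False assms by (intro ennreal_plus) auto
  finally show ?thesis .
qed

lemma payoff_le_const_payoff_add_excess:
  assumes "0 \<le> \<beta>" "\<beta> \<le> 1" "0 \<le> q"
  shows "payoff \<beta> h t X \<tau> \<omega> \<le> payoff \<beta> h t (\<lambda>_. q) \<tau> \<omega> + ennreal (X \<omega> - q)"
proof (cases "\<tau> \<omega>")
  case (enat n)
  have "ennreal (X \<omega> * \<beta> ^ (n - t)) \<le> ennreal (q * \<beta> ^ (n - t)) + ennreal (X \<omega> - q)"
    using assms by (intro ennreal_mult_le_add_excess) (auto intro: power_le_one)
  then show ?thesis
    unfolding payoff_def enat enat.case by (simp only: add.assoc add_left_mono)
next
  case infinity
  then show ?thesis unfolding payoff_def by (intro add_increasing2) auto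
qed

lemma (in sigma_finite_subalgebra) nn_cond_exp_eq_on:
  assumes [measurable]: "Measurable.pred F P" "f \<in> borel_measurable M" "g \<in> borel_measurable M"
    and eq: "\<And>\<omega>. \<omega> \<in> space M \<Longrightarrow> P \<omega> \<Longrightarrow> f \<omega> = g \<omega>"
  shows "AE \<omega> in M. P \<omega> \<longrightarrow> nn_cond_exp M F f \<omega> = nn_cond_exp M F g \<omega>"
proof -
  have [measurable]: "Measurable.pred M P" by (rule measurable_from_subalg[OF subalg]) measurable
  define I where "I \<omega> = (if P \<omega> then 1 else 0 :: ennreal)" for \<omega>
  have [measurable]: "I \<in> borel_measurable F" unfolding I_def by measurable
  have "AE \<omega> in M. I \<omega> * nn_cond_exp M F f \<omega> = nn_cond_exp M F (\<lambda>\<omega>. I \<omega> * f \<omega>) \<omega>"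
    by (rule nn_cond_exp_prod) measurable
  moreover have "AE \<omega> in M. I \<omega> * nn_cond_exp M F g \<omega> = nn_cond_exp M F (\<lambda>\<omega>. I \<omega> * g \<omega>) \<omega>"
    by (rule nn_cond_exp_prod) measurable
  moreover have "AE \<omega> in M. nn_cond_exp M F (\<lambda>\<omega>. I \<omega> * f \<omega>) \<omega> = nn_cond_exp M F (\<lambda>\<omega>. I \<omega> * g \<omega>) \<omega>"
    by (rule nn_cond_exp_cong) (auto intro!: AE_I2 simp: I_def eq)
  ultimately show ?thesis
  proof eventually_elim
    case (elim \<omega>)
    show ?case
    proof
      assume "P \<omega>"
      then have "I \<omega> = 1" by (simp add: I_def)
      with elim show "nn_cond_exp M F f \<omega> = nn_cond_exp M F g \<omega>" by (metis mult_1)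
    qed
  qed
qed

locale retirement_setting =
  fixes M :: "'a measure" and F :: "nat \<Rightarrow> 'a measure" and \<beta> :: real
    and h :: "nat \<Rightarrow> 'a \<Rightarrow> real"
    and V :: "nat \<Rightarrow> real \<Rightarrow> 'a \<Rightarrow> real" and Mi :: "nat \<Rightarrow> 'a \<Rightarrow> real"
  assumes prob: "prob_space M"
    and filt_sub: "\<And>n. subalgebra M (F n)"
    and beta: "0 < \<beta>" "\<beta> < 1"
    and h_pos: "\<And>n \<omega>. \<omega> \<in> space M \<Longrightarrow> 0 < h n \<omega>"
    and h_pred: "\<And>n. h (Suc n) \<in> borel_measurable (F n)"
    and V_version: "\<And>n m. 0 \<le> m \<Longrightarrow>
        is_ess_sup M (F n) (value_family M F \<beta> h n (\<lambda>_. m)) (\<lambda>\<omega>. ennreal (V n m \<omega>))"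
    and M_version: "\<And>n. is_ess_sup M (F n) (index_family M F \<beta> h n) (\<lambda>\<omega>. ennreal (Mi n \<omega>))"
begin

lemma sigma_finite_subalgebra_F: "sigma_finite_subalgebra M (F n)"
proof -
  interpret prob_space M by (rule prob)
  have "finite_measure_subalgebra M (F n)"
    by unfold_locales (rule filt_sub)
  then show ?thesis by (rule finite_measure_subalgebra_is_sigma_finite)
qed

lemma h_measurable[measurable]: "h (Suc n) \<in> borel_measurable M"
  by (rule measurable_from_subalg[OF filt_sub h_pred])

lemma payoff_measurable:
  assumes "stopping_from M F t \<tau>" and [measurable]: "X \<in> borel_measurable M"
  shows "payoff \<beta> h t X \<tau> \<in> borel_measurable M"
proof -
  have "(\<lambda>\<omega>. case i of
      enat n \<Rightarrow> (\<Sum>u\<in>{t..<n}. ennreal (\<beta> ^ (u - t) * h (Suc u) \<omega>)) + ennreal (X \<omega> * \<beta> ^ (n - t))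
    | \<infinity> \<Rightarrow> (\<Sum>k. ennreal (\<beta> ^ k * h (Suc (t + k)) \<omega>))) \<in> borel_measurable M" for i
    by (cases i) simp_all
  then show ?thesis
    unfolding payoff_def[abs_def]
    by (rule measurable_compose_countable[OF _ stopping_from_measurable[OF filt_sub assms(1)]])
qed

lemma V_measurable[measurable]: "0 \<le> q \<Longrightarrow> (\<lambda>\<omega>. ennreal (V u q \<omega>)) \<in> borel_measurable (F u)"
  by (rule is_ess_sup_measurable[OF V_version])

lemma Mi_measurable[measurable]: "(\<lambda>\<omega>. ennreal (Mi u \<omega>)) \<in> borel_measurable (F u)"
  by (rule is_ess_sup_measurable[OF M_version])

lemma level_less_V_measurable:
  assumes "0 \<le> q"
  shows "Measurable.pred (F u) (\<lambda>\<omega>. q < V u q \<omega>)"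
proof -
  have "Measurable.pred (F u) (\<lambda>\<omega>. ennreal q < ennreal (V u q \<omega>))"
    using assms by measurable
  then show ?thesis using assms by (simp add: ennreal_less_iff)
qed

lemma cond_exp_payoff_le_V:
  "stopping_from M F u \<tau> \<Longrightarrow> 0 \<le> q \<Longrightarrow>
    AE \<omega> in M. nn_cond_exp M (F u) (payoff \<beta> h u (\<lambda>_. q) \<tau>) \<omega> \<le> ennreal (V u q \<omega>)"
  by (rule is_ess_sup_upper[OF V_version]) (auto simp: value_family_def)

lemma V_ge_deterministic_stop:
  assumes "0 \<le> q" "u \<le> k"
    and [measurable]: "payoff \<beta> h u (\<lambda>_. q) (\<lambda>_. enat k) \<in> borel_measurable (F u)"
  shows "AE \<omega> in M. payoff \<beta> h u (\<lambda>_. q) (\<lambda>_. enat k) \<omega> \<le> ennreal (V u q \<omega>)"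
proof -
  interpret sigma_finite_subalgebra M "F u" by (rule sigma_finite_subalgebra_F)
  have "AE \<omega> in M. payoff \<beta> h u (\<lambda>_. q) (\<lambda>_. enat k) \<omega> =
      nn_cond_exp M (F u) (payoff \<beta> h u (\<lambda>_. q) (\<lambda>_. enat k)) \<omega>"
    by (rule nn_cond_exp_F_meas) measurable
  with cond_exp_payoff_le_V[OF stopping_from_const[OF filt_sub \<open>u \<le> k\<close>] \<open>0 \<le> q\<close>]
  show ?thesis by eventually_elim simp
qed

lemma V_ge_level:
  assumes "0 < q"
  shows "AE \<omega> in M. q \<le> V u q \<omega>"
proof -
  have "payoff \<beta> h u (\<lambda>_. q) (\<lambda>_. enat u) = (\<lambda>_. ennreal q)"
    by (simp add: payoff_def fun_eq_iff)
  with V_ge_deterministic_stop[of q u u] assms show ?thesis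
    by (auto simp: ennreal_le_iff2 elim!: eventually_mono)
qed

lemma V_ge_continue_once:
  assumes "0 \<le> q"
  shows "AE \<omega> in M. h (Suc u) \<omega> + \<beta> * q \<le> V u q \<omega>"
proof -
  have "payoff \<beta> h u (\<lambda>_. q) (\<lambda>_. enat (Suc u)) = (\<lambda>\<omega>. ennreal (h (Suc u) \<omega>) + ennreal (q * \<beta>))"
    by (simp add: payoff_def fun_eq_iff)
  moreover have [measurable]: "h (Suc u) \<in> borel_measurable (F u)" by (rule h_pred)
  ultimately have "AE \<omega> in M. ennreal (h (Suc u) \<omega>) + ennreal (q * \<beta>) \<le> ennreal (V u q \<omega>)"
    using V_ge_deterministic_stop[of q u "Suc u"] assms by simp
  then show ?thesis using AE_space
  proof eventually_elim
    case (elim \<omega>)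
    have "0 < h (Suc u) \<omega>" "0 \<le> q * \<beta>" using h_pos[OF elim(2)] assms beta by auto
    with elim(1) show ?case
      by (simp add: ennreal_plus[symmetric] ennreal_le_iff2 mult.commute del: ennreal_plus)
  qed
qed

lemma ess_sup_value_family_le:
  assumes [measurable]: "X \<in> borel_measurable (F u)" and "0 \<le> q"
    and W: "is_ess_sup M (F u) (value_family M F \<beta> h u X) W"
  shows "AE \<omega> in M. W \<omega> \<le> ennreal (V u q \<omega>) + ennreal (X \<omega> - q)"
proof (rule is_ess_sup_least[OF W])
  interpret sigma_finite_subalgebra M "F u" by (rule sigma_finite_subalgebra_F)
  have [measurable]: "X \<in> borel_measurable M" by (rule measurable_from_subalg[OF filt_sub[of u]]) measurable
  show "(\<lambda>\<omega>. ennreal (V u q \<omega>) + ennreal (X \<omega> - q)) \<in> borel_measurable (F u)"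
    using \<open>0 \<le> q\<close> by measurable
  fix Y assume "Y \<in> value_family M F \<beta> h u X"
  then obtain \<tau> where Y: "Y = nn_cond_exp M (F u) (payoff \<beta> h u X \<tau>)" and \<tau>: "stopping_from M F u \<tau>"
    unfolding value_family_def by blast
  let ?stop_at_q = "payoff \<beta> h u (\<lambda>_. q) \<tau>" and ?excess = "\<lambda>\<omega>. ennreal (X \<omega> - q)"
  have [measurable]: "payoff \<beta> h u X \<tau> \<in> borel_measurable M" "?stop_at_q \<in> borel_measurable M"
    using \<tau> by (auto intro: payoff_measurable)
  have "AE \<omega> in M. Y \<omega> \<le> nn_cond_exp M (F u) (\<lambda>\<omega>. ?stop_at_q \<omega> + ?excess \<omega>) \<omega>"
    unfolding Y using beta \<open>0 \<le> q\<close>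
    by (intro nn_cond_exp_mono AE_I2 payoff_le_const_payoff_add_excess) auto
  moreover have "AE \<omega> in M. nn_cond_exp M (F u) ?stop_at_q \<omega> + nn_cond_exp M (F u) ?excess \<omega> =
      nn_cond_exp M (F u) (\<lambda>\<omega>. ?stop_at_q \<omega> + ?excess \<omega>) \<omega>"
    by (rule nn_cond_exp_sum) measurable
  moreover have "AE \<omega> in M. ?excess \<omega> = nn_cond_exp M (F u) ?excess \<omega>"
    by (rule nn_cond_exp_F_meas) measurable
  moreover have "AE \<omega> in M. nn_cond_exp M (F u) ?stop_at_q \<omega> \<le> ennreal (V u q \<omega>)"
    by (rule cond_exp_payoff_le_V[OF \<tau> \<open>0 \<le> q\<close>])
  ultimately show "AE \<omega> in M. Y \<omega> \<le> ennreal (V u q \<omega>) + ?excess \<omega>"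
    by eventually_elim (metis add_right_mono order_trans)
qed

lemma V_diff_level_antimono:
  assumes "0 < q" "q \<le> q'"
  shows "AE \<omega> in M. V u q' \<omega> - q' \<le> V u q \<omega> - q"
proof -
  have "AE \<omega> in M. ennreal (V u q' \<omega>) \<le> ennreal (V u q \<omega>) + ennreal (q' - q)"
    using ess_sup_value_family_le[of "\<lambda>_. q'" u q, OF _ _ V_version] assms by simp
  then show ?thesis using V_ge_level[OF \<open>0 < q\<close>, of u]
  proof eventually_elim
    case (elim \<omega>)
    have "ennreal (V u q \<omega>) + ennreal (q' - q) = ennreal (V u q \<omega> + (q' - q))"
      using elim(2) assms by simp
    with elim(1) have "ennreal (V u q' \<omega>) \<le> ennreal (V u q \<omega> + (q' - q))" by simp
    then show ?case using elim(2) assms by (subst (asm) ennreal_le_iff) auto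
  qed
qed

lemma index_candidate_le_level:
  assumes X: "X \<in> borel_measurable (F u)" and "0 \<le> q"
    and W: "is_ess_sup M (F u) (value_family M F \<beta> h u X) W"
    and X_less: "AE \<omega> in M. ennreal (X \<omega>) < W \<omega>"
  shows "AE \<omega> in M. V u q \<omega> \<le> q \<longrightarrow> X \<omega> \<le> q"
  using ess_sup_value_family_le[OF X \<open>0 \<le> q\<close> W] X_less
proof eventually_elim
  case (elim \<omega>)
  show ?case
  proof (rule impI, rule ccontr)
    assume "V u q \<omega> \<le> q" "\<not> X \<omega> \<le> q"
    then have "W \<omega> \<le> ennreal q + ennreal (X \<omega> - q)"
      using elim(1) by (meson add_right_mono ennreal_leI order_trans)
    also have "\<dots> = ennreal (X \<omega>)"
      using ennreal_plus[of q "X \<omega> - q"] \<open>\<not> X \<omega> \<le> q\<close> \<open>0 \<le> q\<close> by simp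
    finally show False using elim(2) by simp
  qed
qed

lemma V_gt_below_index:
  assumes "0 < q"
  shows "AE \<omega> in M. q < Mi u \<omega> \<longrightarrow> q < V u q \<omega>"
proof -
  define Z where "Z \<omega> = (if q < V u q \<omega> then ennreal (Mi u \<omega>) else ennreal q)" for \<omega>
  have [measurable]: "Measurable.pred (F u) (\<lambda>\<omega>. q < V u q \<omega>)"
    using level_less_V_measurable assms by simp
  have "AE \<omega> in M. ennreal (Mi u \<omega>) \<le> Z \<omega>"
  proof (rule is_ess_sup_least[OF M_version])
    show "Z \<in> borel_measurable (F u)" unfolding Z_def by measurable
    fix Y assume "Y \<in> index_family M F \<beta> h u"
    then obtain X W where Y: "Y = (\<lambda>\<omega>. ennreal (X \<omega>))" and "X \<in> borel_measurable (F u)"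
      and "is_ess_sup M (F u) (value_family M F \<beta> h u X) W" and "AE \<omega> in M. ennreal (X \<omega>) < W \<omega>"
      unfolding index_family_def by blast
    then have "AE \<omega> in M. V u q \<omega> \<le> q \<longrightarrow> X \<omega> \<le> q"
      using assms by (intro index_candidate_le_level) auto
    moreover have "AE \<omega> in M. Y \<omega> \<le> ennreal (Mi u \<omega>)"
      by (rule is_ess_sup_upper[OF M_version]) fact
    ultimately show "AE \<omega> in M. Y \<omega> \<le> Z \<omega>"
      unfolding Y Z_def by eventually_elim (auto intro: ennreal_leI)
  qed
  then show ?thesis
  proof eventually_elim
    case (elim \<omega>)
    show ?case
    proof (rule impI, rule ccontr)
      assume "q < Mi u \<omega>" "\<not> q < V u q \<omega>"
      with elim have "ennreal (Mi u \<omega>) \<le> ennreal q" by (simp add: Z_def)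
      with assms \<open>q < Mi u \<omega>\<close> show False by (simp add: ennreal_le_iff2)
    qed
  qed
qed

lemma cond_exp_payoff_countable_level:
  fixes K :: "'a \<Rightarrow> 'i::countable"
  assumes K[measurable]: "K \<in> measurable (F u) (count_space UNIV)" and \<tau>: "stopping_from M F u \<tau>"
  shows "AE \<omega> in M. \<forall>k. K \<omega> = k \<longrightarrow>
           nn_cond_exp M (F u) (payoff \<beta> h u (\<lambda>\<omega>. c (K \<omega>)) \<tau>) \<omega> =
           nn_cond_exp M (F u) (payoff \<beta> h u (\<lambda>_. c k) \<tau>) \<omega>"
proof -
  interpret sigma_finite_subalgebra M "F u" by (rule sigma_finite_subalgebra_F)
  have "(\<lambda>\<omega>. c (K \<omega>)) \<in> borel_measurable (F u)"
    by (rule measurable_compose[OF K]) simp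
  then have [measurable]: "(\<lambda>\<omega>. c (K \<omega>)) \<in> borel_measurable M"
    by (rule measurable_from_subalg[OF filt_sub])
  show ?thesis
  proof (unfold AE_all_countable, intro allI nn_cond_exp_eq_on)
    fix k
    show "Measurable.pred (F u) (\<lambda>\<omega>. K \<omega> = k)" by measurable
    show "payoff \<beta> h u (\<lambda>\<omega>. c (K \<omega>)) \<tau> \<in> borel_measurable M"
      "payoff \<beta> h u (\<lambda>_. c k) \<tau> \<in> borel_measurable M"
      using \<tau> by (auto intro: payoff_measurable)
    show "payoff \<beta> h u (\<lambda>\<omega>. c (K \<omega>)) \<tau> \<omega> = payoff \<beta> h u (\<lambda>_. c k) \<tau> \<omega>" if "K \<omega> = k" for \<omega>
      using that by (intro payoff_cong) simp
  qed
qed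

lemma is_ess_sup_value_family_countable_level:
  fixes K :: "'a \<Rightarrow> 'i::countable"
  assumes K[measurable]: "K \<in> measurable (F u) (count_space UNIV)" and c: "\<And>k. 0 \<le> c k"
  shows "is_ess_sup M (F u) (value_family M F \<beta> h u (\<lambda>\<omega>. c (K \<omega>)))
           (\<lambda>\<omega>. ennreal (V u (c (K \<omega>)) \<omega>))"
proof -
  note same_level = cond_exp_payoff_countable_level[OF K, where c = c]
  have upper: "AE \<omega> in M. Y \<omega> \<le> ennreal (V u (c (K \<omega>)) \<omega>)"
    if Y_mem: "Y \<in> value_family M F \<beta> h u (\<lambda>\<omega>. c (K \<omega>))" for Y
  proof -
    obtain \<tau> where Y: "Y = nn_cond_exp M (F u) (payoff \<beta> h u (\<lambda>\<omega>. c (K \<omega>)) \<tau>)"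
      and \<tau>: "stopping_from M F u \<tau>"
      using Y_mem unfolding value_family_def by blast
    have "AE \<omega> in M. \<forall>k. nn_cond_exp M (F u) (payoff \<beta> h u (\<lambda>_. c k) \<tau>) \<omega> \<le> ennreal (V u (c k) \<omega>)"
      unfolding AE_all_countable using cond_exp_payoff_le_V[OF \<tau> c] by blast
    with same_level[OF \<tau>] show ?thesis
      unfolding Y by eventually_elim auto
  qed
  have least: "AE \<omega> in M. ennreal (V u (c (K \<omega>)) \<omega>) \<le> Z \<omega>"
    if [measurable]: "Z \<in> borel_measurable (F u)"
      and Z_upper: "\<forall>Y \<in> value_family M F \<beta> h u (\<lambda>\<omega>. c (K \<omega>)). AE \<omega> in M. Y \<omega> \<le> Z \<omega>" for Z
  proof -
    have "AE \<omega> in M. ennreal (V u (c k) \<omega>) \<le> (if K \<omega> = k then Z \<omega> else \<infinity>)" for k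
    proof (rule is_ess_sup_least[OF V_version[OF c]])
      show "(\<lambda>\<omega>. if K \<omega> = k then Z \<omega> else \<infinity>) \<in> borel_measurable (F u)" by measurable
      fix Y assume "Y \<in> value_family M F \<beta> h u (\<lambda>_. c k)"
      then obtain \<tau> where Y: "Y = nn_cond_exp M (F u) (payoff \<beta> h u (\<lambda>_. c k) \<tau>)"
        and \<tau>: "stopping_from M F u \<tau>"
        unfolding value_family_def by blast
      have "AE \<omega> in M. nn_cond_exp M (F u) (payoff \<beta> h u (\<lambda>\<omega>. c (K \<omega>)) \<tau>) \<omega> \<le> Z \<omega>"
        using Z_upper \<tau> unfolding value_family_def by blast
      with same_level[OF \<tau>] show "AE \<omega> in M. Y \<omega> \<le> (if K \<omega> = k then Z \<omega> else \<infinity>)"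
        unfolding Y by eventually_elim auto
    qed
    then have "AE \<omega> in M. \<forall>k. ennreal (V u (c k) \<omega>) \<le> (if K \<omega> = k then Z \<omega> else \<infinity>)"
      unfolding AE_all_countable ..
    then show ?thesis
      by eventually_elim (metis (full_types))
  qed
  have "(\<lambda>\<omega>. ennreal (V u (c (K \<omega>)) \<omega>)) \<in> borel_measurable (F u)"
    by (rule measurable_compose_countable[OF V_measurable[OF c] K])
  with upper least show ?thesis
    unfolding is_ess_sup_def by blast
qed

lemma first_profitable_level_le_index:
  fixes c :: "nat \<Rightarrow> real"
  assumes c_pos: "\<And>k. 0 < c k" and profitable: "AE \<omega> in M. \<exists>k. c k < V u (c k) \<omega>"
  shows "AE \<omega> in M. c (LEAST k. c k < V u (c k) \<omega>) \<le> Mi u \<omega>"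
proof -
  define K where "K \<omega> = (LEAST k. c k < V u (c k) \<omega>)" for \<omega>
  have [measurable]: "Measurable.pred (F u) (\<lambda>\<omega>. c k < V u (c k) \<omega>)" for k
    by (rule level_less_V_measurable[OF less_imp_le[OF c_pos]])
  have K[measurable]: "K \<in> measurable (F u) (count_space UNIV)"
    unfolding K_def by measurable
  have "AE \<omega> in M. ennreal (c (K \<omega>)) < ennreal (V u (c (K \<omega>)) \<omega>)"
    using profitable
  proof eventually_elim
    case (elim \<omega>)
    then have "c (K \<omega>) < V u (c (K \<omega>)) \<omega>" unfolding K_def by (rule LeastI_ex)
    then show ?case by (simp add: ennreal_less_iff less_imp_le[OF c_pos])
  qed
  moreover have "(\<lambda>\<omega>. c (K \<omega>)) \<in> borel_measurable (F u)"
    by (rule measurable_compose[OF K]) simp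
  moreover have "\<forall>\<omega>\<in>space M. 0 < c (K \<omega>)" using c_pos by blast
  moreover have "is_ess_sup M (F u) (value_family M F \<beta> h u (\<lambda>\<omega>. c (K \<omega>)))
      (\<lambda>\<omega>. ennreal (V u (c (K \<omega>)) \<omega>))"
    by (rule is_ess_sup_value_family_countable_level[OF K]) (simp add: less_imp_le[OF c_pos])
  ultimately have "(\<lambda>\<omega>. ennreal (c (K \<omega>))) \<in> index_family M F \<beta> h u"
    unfolding index_family_def by (intro CollectI exI[of _ "\<lambda>\<omega>. c (K \<omega>)"]) blast
  then have "AE \<omega> in M. ennreal (c (K \<omega>)) \<le> ennreal (Mi u \<omega>)"
    by (rule is_ess_sup_upper[OF M_version])
  then have "AE \<omega> in M. c (K \<omega>) \<le> Mi u \<omega>"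
  proof eventually_elim
    case (elim \<omega>)
    with c_pos[of "K \<omega>"] show ?case by (auto simp: ennreal_le_iff2)
  qed
  then show ?thesis unfolding K_def .
qed

text \<open>Continuing for one period earns \<open>h(u+1) > 0\<close>, which beats every small enough level.\<close>
lemma eventually_profitable_level:
  fixes c :: "nat \<Rightarrow> real"
  assumes c_pos: "\<And>k. 0 < c k" and c_small: "\<And>\<epsilon>. 0 < \<epsilon> \<Longrightarrow> \<exists>k. c k < \<epsilon>"
  shows "AE \<omega> in M. \<exists>k. c k < V u (c k) \<omega>"
proof -
  have "AE \<omega> in M. \<forall>k. h (Suc u) \<omega> + \<beta> * c k \<le> V u (c k) \<omega>"
    unfolding AE_all_countable using V_ge_continue_once less_imp_le[OF c_pos] by blast
  then show ?thesis using AE_space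
  proof eventually_elim
    case (elim \<omega>)
    obtain k where "c k < h (Suc u) \<omega>" using c_small h_pos[OF elim(2)] by blast
    moreover have "0 \<le> \<beta> * c k" using beta c_pos[of k] by simp
    ultimately have "c k < h (Suc u) \<omega> + \<beta> * c k" by linarith
    also have "\<dots> \<le> V u (c k) \<omega>" using elim(1) by blast
    finally show ?case by blast
  qed
qed

lemma index_pos: "AE \<omega> in M. 0 < Mi u \<omega>"
proof -
  define c :: "nat \<Rightarrow> real" where "c k = inverse (real (Suc k))" for k
  have c_pos: "0 < c k" for k by (simp add: c_def)
  have "\<exists>k. c k < \<epsilon>" if "0 < \<epsilon>" for \<epsilon>
    using reals_Archimedean[OF that] by (simp add: c_def)
  with c_pos have "AE \<omega> in M. c (LEAST k. c k < V u (c k) \<omega>) \<le> Mi u \<omega>"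
    by (intro first_profitable_level_le_index eventually_profitable_level)
  then show ?thesis
    by eventually_elim (rule less_le_trans[OF c_pos])
qed

text \<open>Where \<open>V(u;q) > q\<close>, the first profitable level is \<open>q\<close> itself, so \<open>q \<le> M(u)\<close> there.\<close>
lemma V_le_above_index:
  assumes "0 < q"
  shows "AE \<omega> in M. Mi u \<omega> < q \<longrightarrow> V u q \<omega> \<le> q"
proof -
  define c :: "nat \<Rightarrow> real" where "c k = (if k = 0 then q else inverse (real k))" for k
  have c_pos: "0 < c k" for k using assms by (simp add: c_def)
  have "\<exists>k. c k < \<epsilon>" if \<epsilon>_pos: "0 < \<epsilon>" for \<epsilon>
  proof -
    obtain n where "inverse (real (Suc n)) < \<epsilon>" using reals_Archimedean[OF \<epsilon>_pos] by blast
    then show ?thesis by (intro exI[of _ "Suc n"]) (simp add: c_def)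
  qed
  with c_pos have "AE \<omega> in M. c (LEAST k. c k < V u (c k) \<omega>) \<le> Mi u \<omega>"
    by (intro first_profitable_level_le_index eventually_profitable_level)
  then show ?thesis
  proof eventually_elim
    case (elim \<omega>)
    show ?case
    proof (rule impI, rule ccontr)
      assume "Mi u \<omega> < q" "\<not> V u q \<omega> \<le> q"
      then have "(LEAST k. c k < V u (c k) \<omega>) = 0" by (intro Least_eq_0) (simp add: c_def)
      with elim \<open>Mi u \<omega> < q\<close> show False by (simp add: c_def)
    qed
  qed
qed

lemma AE_rat_level_properties:
  "AE \<omega> in M. \<forall>u. \<forall>q\<in>\<rat>. 0 < q \<longrightarrow>
     q \<le> V u q \<omega> \<and> (Mi u \<omega> < q \<longrightarrow> V u q \<omega> \<le> q) \<and> (q < Mi u \<omega> \<longrightarrow> q < V u q \<omega>) \<and>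
     (\<forall>q'\<in>\<rat>. q \<le> q' \<longrightarrow> V u q' \<omega> - q' \<le> V u q \<omega> - q)"
  unfolding AE_all_countable
proof (intro allI AE_ball_countable' countable_rat)
  fix u :: nat and q :: real
  show "AE \<omega> in M. 0 < q \<longrightarrow>
    q \<le> V u q \<omega> \<and> (Mi u \<omega> < q \<longrightarrow> V u q \<omega> \<le> q) \<and> (q < Mi u \<omega> \<longrightarrow> q < V u q \<omega>) \<and>
    (\<forall>q'\<in>\<rat>. q \<le> q' \<longrightarrow> V u q' \<omega> - q' \<le> V u q \<omega> - q)"
  proof (cases "0 < q")
    case True
    have "AE \<omega> in M. \<forall>q'\<in>\<rat>. q \<le> q' \<longrightarrow> V u q' \<omega> - q' \<le> V u q \<omega> - q"
    proof (intro AE_ball_countable' countable_rat)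
      fix q'
      show "AE \<omega> in M. q \<le> q' \<longrightarrow> V u q' \<omega> - q' \<le> V u q \<omega> - q"
        using V_diff_level_antimono[OF True, of q' u] by (cases "q \<le> q'") (auto elim: eventually_mono)
    qed
    with V_ge_level[OF True] V_le_above_index[OF True] V_gt_below_index[OF True]
    show ?thesis by eventually_elim auto
  qed simp
qed

lemma V_eq_iff_index_le:
  assumes V_cont: "AE \<omega> in M. \<forall>n. continuous_on {0..} (\<lambda>m. V n m \<omega>)"
  shows "AE \<omega> in M. \<forall>u x. 0 \<le> x \<longrightarrow> (V u x \<omega> = x \<longleftrightarrow> Mi u \<omega> \<le> x)"
  using AE_rat_level_properties V_cont
proof eventually_elim
  case (elim \<omega>)
  show ?case
  proof (intro allI impI)
    fix u :: nat and x :: real assume "0 \<le> x"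
    have level: "q \<le> V u q \<omega>" "Mi u \<omega> < q \<Longrightarrow> V u q \<omega> \<le> q" "q < Mi u \<omega> \<Longrightarrow> q < V u q \<omega>"
      "q' \<in> \<rat> \<Longrightarrow> q \<le> q' \<Longrightarrow> V u q' \<omega> - q' \<le> V u q \<omega> - q"
      if "q \<in> \<rat>" "0 < q" for q q'
      using elim(1) that by blast+
    show "V u x \<omega> = x \<longleftrightarrow> Mi u \<omega> \<le> x"
      using elim(2) level by (intro fixed_point_iff_ge_threshold[OF _ _ _ _ _ \<open>0 \<le> x\<close>]) blast+
  qed
qed

end

theorem proposition3p4:
  fixes M :: "'a measure" and F :: "nat \<Rightarrow> 'a measure" and \<beta> :: real
    and h :: "nat \<Rightarrow> 'a \<Rightarrow> real"
    and V :: "nat \<Rightarrow> real \<Rightarrow> 'a \<Rightarrow> real" and Mi :: "nat \<Rightarrow> 'a \<Rightarrow> real"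
    and t \<theta> :: nat
  assumes prob: "prob_space M"
    and complete: "complete_measure M"
    and filt_sub: "\<And>n. subalgebra M (F n)"
    and filt_mono: "\<And>n k. n \<le> k \<Longrightarrow> sets (F n) \<subseteq> sets (F k)"
    and beta: "0 < \<beta>" "\<beta> < 1"
    and h_pos: "\<And>n \<omega>. \<omega> \<in> space M \<Longrightarrow> 0 < h n \<omega>"
    and h_pred: "\<And>n. h (Suc n) \<in> borel_measurable (F n)"
    and h_int: "(\<integral>\<^sup>+ \<omega>. (\<Sum>k. ennreal (\<beta> ^ k * h (Suc k) \<omega>)) \<partial>M) < \<infinity>"
    and V_version: "\<And>n m. 0 \<le> m \<Longrightarrow>
        is_ess_sup M (F n) (value_family M F \<beta> h n (\<lambda>_. m)) (\<lambda>\<omega>. ennreal (V n m \<omega>))"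
    and V_cont: "AE \<omega> in M. \<forall>n. continuous_on {0..} (\<lambda>m. V n m \<omega>)"
    and M_version: "\<And>n. is_ess_sup M (F n) (index_family M F \<beta> h n) (\<lambda>\<omega>. ennreal (Mi n \<omega>))"
    and t_le: "t \<le> \<theta>"
  shows "AE \<omega> in M.
           sigma_hit V t (index_min Mi t \<theta> \<omega>) \<omega> \<le> enat \<theta> \<and>
           enat \<theta> < sigma_hit_left V t (index_min Mi t \<theta> \<omega>) \<omega>"
proof -
  interpret retirement_setting M F \<beta> h V Mi
    by (rule retirement_setting.intro[OF prob filt_sub beta h_pos h_pred V_version M_version])
  have "AE \<omega> in M. \<forall>u. 0 < Mi u \<omega>"
    unfolding AE_all_countable using index_pos by blast
  with V_eq_iff_index_le[OF V_cont] show ?thesis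
    by eventually_elim (rule sigma_hit_index_min[OF _ _ t_le]; blast)
qed

end
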